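(* Let $(\Omega,\Sigma,\mu)$ be a measure space and suppose $T:M^{2,\infty}[0,1]\to L^{2,\infty}(\Omega,\Sigma,\mu)$ is an embedding (an isomorphism onto its range). Then $(Th_n)_{n\ge1}$ is not a pairwise disjoint sequence.
   Context: For a measure space $(\Omega,\Sigma,\mu)$ and $1<p<\infty$, $L^{p,\infty}(\Omega,\Sigma,\mu)$ is the space of (equivalence classes of) measurable $f$ with $\|f\|=\sup_{c>0}c\,(\mu\{|f|>c\})^{1/p}<\infty$, a Banach space under an equivalent norm, and $M^{p,\infty}(\Omega,\Sigma,\mu)$ is its closed subspace generated by the characteristic functions $\chi_\sigma$ of measurable sets of finite measure; $M^{2,\infty}[0,1]$ refers to $[0,1]$ with Lebesgue measure. Two functions $f,g$ are disjoint if $|f|\wedge|g|=0$. $(h_n)$ are the $L^\infty$-normalized Haar functions on $[0,1]$: $h_1\equiv1$, and for $n=2^k+l$ with $k\ge0$, $1\le l\le 2^k$, $h_n=1$ on $[\frac{2l-2}{2^{k+1}},\frac{2l-1}{2^{k+1}})$, $h_n=-1$ on $[\frac{2l-1}{2^{k+1}},\frac{2l}{2^{k+1}})$, and $h_n=0$ elsewhere. *)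

theory Defs
  imports "HOL-Analysis.Analysis"
begin

definition weak_norm :: "'a measure \<Rightarrow> real \<Rightarrow> ('a \<Rightarrow> real) \<Rightarrow> ennreal" where
  "weak_norm M p f =
     (SUP c\<in>{0::real<..}.
        (let m = emeasure M {x \<in> space M. c < \<bar>f x\<bar>}
         in if m = \<infinity> then \<infinity> else ennreal (c * (enn2real m) powr (1 / p))))"

definition Lweak :: "'a measure \<Rightarrow> real \<Rightarrow> ('a \<Rightarrow> real) set" where
  "Lweak M p = {f. f \<in> borel_measurable M \<and> weak_norm M p f < \<infinity>}"

definition fin_char_span :: "'a measure \<Rightarrow> ('a \<Rightarrow> real) set" where
  "fin_char_span M = {g. \<exists>(n::nat) (c::nat \<Rightarrow> real) (A::nat \<Rightarrow> 'a set).
       (\<forall>i<n. A i \<in> sets M \<and> emeasure M (A i) < \<infinity>) \<and>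
       g = (\<lambda>x. \<Sum>i<n. c i * indicator (A i) x)}"

definition Mweak :: "'a measure \<Rightarrow> real \<Rightarrow> ('a \<Rightarrow> real) set" where
  "Mweak M p = {f \<in> Lweak M p. \<forall>e>0. \<exists>g \<in> fin_char_span M.
       weak_norm M p (\<lambda>x. f x - g x) < ennreal e}"

text \<open>L^\<infinity>-normalized Haar functions on [0,1], indexed from 1.\<close>
definition haar :: "nat \<Rightarrow> real \<Rightarrow> real" where
  "haar n x =
    (if n = 1 then 1
     else if (\<exists>k l. n = 2^k + l \<and> 1 \<le> l \<and> l \<le> 2^k \<and>
                 (2 * real l - 2) / 2^(k+1) \<le> x \<and> x < (2 * real l - 1) / 2^(k+1)) then 1
     else if (\<exists>k l. n = 2^k + l \<and> 1 \<le> l \<and> l \<le> 2^k \<and>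
                 (2 * real l - 1) / 2^(k+1) \<le> x \<and> x < (2 * real l) / 2^(k+1)) then -1
     else 0)"

end

theory Submission
  imports Defs
begin

(*
  For disjoint g_1, ..., g_N the level set {|g_1 + ... + g_N| > s} is covered by the sets
  {|g_i| > s}, so in weak L^2 the norm of a disjoint sum is at most sqrt N times the largest norm
  of a summand. If the T h_n were disjoint, this would apply to the images of sums of Haar
  functions from different levels. Such sums can be much larger: for N = 2^m we build N blocks of
  Haar functions on distinct levels, each distributed like the weight u |-> sqrt (N / (u + 1)) on
  {0, ..., N - 1} and hence of weak norm at most 1, whose sum restricted to each dyadic interval
  of length 1 / N is a Rademacher sum with a rotation of these weights as coefficients. Their
  square sum is N H_N, so by the Paley-Zygmund inequality the sum exceeds sqrt (N H_N) / 2 on a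
  set of measure at least 3/16. The two-sided bounds on T then give
  c sqrt (3 N H_N) / 8 <= C sqrt N, which fails for large N since the harmonic numbers H_N are
  unbounded.
*)

section \<open>Weak norms and finite step functions\<close>

lemma mult_powr_le_iff:
  fixes r s w p :: real
  assumes "p > 0" "s > 0" "r \<ge> 0" "w \<ge> 0"
  shows "s * r powr (1 / p) \<le> w \<longleftrightarrow> r \<le> (w / s) powr p"
proof
  assume "s * r powr (1 / p) \<le> w"
  then have "r powr (1 / p) \<le> w / s"
    using assms by (simp add: pos_le_divide_eq mult.commute)
  then have "(r powr (1 / p)) powr p \<le> (w / s) powr p"
    using assms by (intro powr_mono2) auto
  then show "r \<le> (w / s) powr p"
    using assms by (simp add: powr_powr)
next
  assume "r \<le> (w / s) powr p"
  then have "r powr (1 / p) \<le> ((w / s) powr p) powr (1 / p)"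
    using assms by (intro powr_mono2) auto
  also have "\<dots> \<le> w / s"
    using assms by (simp add: powr_powr)
  finally show "s * r powr (1 / p) \<le> w"
    using assms by (simp add: pos_le_divide_eq mult.commute)
qed

lemma weak_norm_le_iff:
  assumes p: "p > 0" and w: "w \<ge> 0"
  shows "weak_norm M p g \<le> ennreal w \<longleftrightarrow>
    (\<forall>s>0. emeasure M {x \<in> space M. s < \<bar>g x\<bar>} \<le> ennreal ((w / s) powr p))"
proof -
  have "(if m = \<infinity> then \<infinity> else ennreal (s * enn2real m powr (1 / p))) \<le> ennreal w
      \<longleftrightarrow> m \<le> ennreal ((w / s) powr p)" if s: "s > 0" for m :: ennreal and s :: real
  proof (cases m)
    case (real r)
    then show ?thesis
      using mult_powr_le_iff[OF p s _ w, of r] s w by (simp add: ennreal_le_iff)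
  qed (simp add: top_unique)
  then show ?thesis
    unfolding weak_norm_def Let_def SUP_le_iff by auto
qed

lemma weak_norm_ge:
  assumes p: "p > 0" and s: "s > 0" and r: "r \<ge> 0"
    and le: "ennreal r \<le> emeasure M {x \<in> space M. s < \<bar>g x\<bar>}"
  shows "ennreal (s * r powr (1 / p)) \<le> weak_norm M p g"
proof -
  define m where "m = emeasure M {x \<in> space M. s < \<bar>g x\<bar>}"
  have "ennreal (s * r powr (1 / p)) \<le>
      (if m = \<infinity> then \<infinity> else ennreal (s * enn2real m powr (1 / p)))"
  proof (cases m)
    case (real q)
    with le have "r \<le> q" using r by (simp add: m_def)
    then show ?thesis
      using real p s r by (auto intro!: ennreal_leI mult_left_mono powr_mono2)
  qed simp
  also have "\<dots> \<le> weak_norm M p g"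
    unfolding weak_norm_def Let_def m_def using s by (intro SUP_upper) auto
  finally show ?thesis .
qed

lemma weak_norm_zero: "p > 0 \<Longrightarrow> weak_norm M p (\<lambda>x. 0) = 0"
  using weak_norm_le_iff[of p 0 M "\<lambda>x. 0"] by simp

lemma fin_char_spanE:
  assumes "g \<in> fin_char_span M"
  obtains n :: nat and c :: "nat \<Rightarrow> real" and A
  where "\<forall>i<n. A i \<in> sets M \<and> emeasure M (A i) < \<infinity>"
    and "g = (\<lambda>x. \<Sum>i<n. c i * indicator (A i) x)"
  using assms unfolding fin_char_span_def mem_Collect_eq by (elim exE conjE) blast

lemma fin_char_span_zero: "(\<lambda>x. 0) \<in> fin_char_span M"
  unfolding fin_char_span_def by (intro CollectI exI[of _ 0]) auto

lemma fin_char_span_indicator: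
  assumes "A \<in> sets M" "emeasure M A < \<infinity>"
  shows "indicator A \<in> fin_char_span M"
  unfolding fin_char_span_def using assms
  by (intro CollectI exI[of _ 1] exI[of _ "\<lambda>_. 1"] exI[of _ "\<lambda>_. A"]) auto

lemma fin_char_span_lincomb:
  assumes "f \<in> fin_char_span M" "g \<in> fin_char_span M"
  shows "(\<lambda>x. a * f x + b * g x) \<in> fin_char_span M"
proof -
  obtain n :: nat and c A where A: "\<forall>i<n. A i \<in> sets M \<and> emeasure M (A i) < \<infinity>"
    and f: "f = (\<lambda>x. \<Sum>i<n. c i * indicator (A i) x)"
    using assms(1) by (rule fin_char_spanE)
  obtain n' :: nat and c' A' where A': "\<forall>i<n'. A' i \<in> sets M \<and> emeasure M (A' i) < \<infinity>"
    and g: "g = (\<lambda>x. \<Sum>i<n'. c' i * indicator (A' i) x)"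
    using assms(2) by (rule fin_char_spanE)
  define d where "d i = (if i < n then a * c i else b * c' (i - n))" for i
  define B where "B i = (if i < n then A i else A' (i - n))" for i
  have shift: "(\<Sum>i<n + k. d i * indicator (B i) x) =
      a * f x + (\<Sum>i<k. d (n + i) * indicator (B (n + i)) x)" for k x
    by (induction k) (simp_all add: f d_def B_def sum_distrib_left)
  have "(\<lambda>x. a * f x + b * g x) = (\<lambda>x. \<Sum>i<n + n'. d i * indicator (B i) x)"
    unfolding shift by (simp add: g d_def B_def sum_distrib_left)
  moreover have "\<forall>i<n + n'. B i \<in> sets M \<and> emeasure M (B i) < \<infinity>"
    using A A' by (simp add: B_def)
  ultimately show ?thesis
    unfolding fin_char_span_def by blast
qed

lemma fin_char_span_sum:
  assumes "finite S" "\<forall>n\<in>S. g n \<in> fin_char_span M"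
  shows "(\<lambda>x. \<Sum>n\<in>S. a n * g n x) \<in> fin_char_span M"
  using assms
proof (induction S rule: finite_induct)
  case empty
  then show ?case using fin_char_span_zero by simp
next
  case (insert n S)
  then have "(\<lambda>x. a n * g n x + 1 * (\<Sum>n\<in>S. a n * g n x)) \<in> fin_char_span M"
    by (intro fin_char_span_lincomb) auto
  with insert.hyps show ?case by simp
qed

lemma weak_norm_le_bounded_support:
  assumes p: "p > 0" and B: "\<And>x. \<bar>g x\<bar> \<le> B"
    and U: "U \<in> sets M" "emeasure M U < \<infinity>" and support: "\<And>x. x \<notin> U \<Longrightarrow> g x = 0"
  shows "weak_norm M p g \<le> ennreal (B * enn2real (emeasure M U) powr (1 / p))"
  unfolding weak_norm_def Let_def
proof (rule SUP_least)
  fix s :: real assume "s \<in> {0<..}"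
  then have s: "s > 0" by simp
  define m where "m = emeasure M {x \<in> space M. s < \<bar>g x\<bar>}"
  have "{x \<in> space M. s < \<bar>g x\<bar>} \<subseteq> U"
    using support s by (smt (verit) abs_zero mem_Collect_eq subsetI)
  then have "m \<le> emeasure M U"
    unfolding m_def using U(1) by (rule emeasure_mono)
  then have m_fin: "m \<noteq> \<infinity>" and m_le: "enn2real m \<le> enn2real (emeasure M U)"
    using U(2) by (simp_all add: enn2real_mono top.not_eq_extremum le_less_trans)
  have "s * enn2real m powr (1 / p) \<le> B * enn2real (emeasure M U) powr (1 / p)"
  proof (cases "s < B")
    case True
    then show ?thesis
      using m_le p s by (intro mult_mono powr_mono2) auto
  next
    case False
    then have "m = 0"
      unfolding m_def using B by (smt (verit) emeasure_empty Collect_empty_eq)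
    moreover have "B \<ge> 0"
      using order_trans[OF abs_ge_zero B] .
    ultimately show ?thesis
      by simp
  qed
  then show "(if m = \<infinity> then \<infinity> else ennreal (s * enn2real m powr (1 / p)))
      \<le> ennreal (B * enn2real (emeasure M U) powr (1 / p))"
    using m_fin by (simp add: ennreal_leI)
qed

lemma fin_char_span_subset_Mweak:
  assumes p: "p > 0"
  shows "fin_char_span M \<subseteq> Mweak M p"
proof
  fix g assume g_span: "g \<in> fin_char_span M"
  then obtain n :: nat and c A where A: "\<forall>i<n. A i \<in> sets M \<and> emeasure M (A i) < \<infinity>"
    and g: "g = (\<lambda>x. \<Sum>i<n. c i * indicator (A i) x)"
    by (rule fin_char_spanE)
  define U where "U = (\<Union>i<n. A i)"
  have U: "U \<in> sets M"
    using A by (auto simp: U_def)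
  have "emeasure M U \<le> (\<Sum>i<n. emeasure M (A i))"
    unfolding U_def using A by (intro emeasure_subadditive_finite) auto
  also have "\<dots> < \<infinity>" using A by simp
  finally have U_fin: "emeasure M U < \<infinity>" .
  have bound: "\<bar>g x\<bar> \<le> (\<Sum>i<n. \<bar>c i\<bar>)" for x
    unfolding g by (rule order_trans[OF sum_abs sum_mono]) (auto simp: indicator_def)
  have support: "g x = 0" if "x \<notin> U" for x
    using that unfolding g U_def by (intro sum.neutral) auto
  have "weak_norm M p g \<le> ennreal ((\<Sum>i<n. \<bar>c i\<bar>) * enn2real (emeasure M U) powr (1 / p))"
    by (rule weak_norm_le_bounded_support[OF p bound U U_fin support])
  then have "weak_norm M p g < \<infinity>"
    by (rule le_less_trans) simp
  moreover have "g \<in> borel_measurable M"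
    unfolding g using A by (intro borel_measurable_sum borel_measurable_times) auto
  moreover have "weak_norm M p (\<lambda>x. g x - g x) = 0"
    using weak_norm_zero[OF p] by simp
  ultimately show "g \<in> Mweak M p"
    unfolding Mweak_def Lweak_def using g_span by force
qed

section \<open>Images of finite sums and disjoint sums\<close>

lemma AE_image_sum:
  fixes T :: "('b \<Rightarrow> real) \<Rightarrow> 'a \<Rightarrow> real"
  assumes p: "p > 0"
    and linear: "\<forall>f \<in> Mweak L p. \<forall>g \<in> Mweak L p. \<forall>a b::real.
      AE x in M. T (\<lambda>y. a * f y + b * g y) x = a * T f x + b * T g x"
    and "finite S" "\<forall>n\<in>S. g n \<in> fin_char_span L"
  shows "AE x in M. T (\<lambda>y. \<Sum>n\<in>S. a n * g n y) x = (\<Sum>n\<in>S. a n * T (g n) x)"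
  using assms(3,4)
proof (induction S rule: finite_induct)
  case empty
  have "(\<lambda>y. 0) \<in> Mweak L p"
    using fin_char_span_zero fin_char_span_subset_Mweak[OF p] by blast
  then show ?case
    using linear[rule_format, of "\<lambda>y. 0" "\<lambda>y. 0" 0 0] by simp
next
  case (insert n S)
  have "g n \<in> Mweak L p" "(\<lambda>y. \<Sum>n\<in>S. a n * g n y) \<in> Mweak L p"
    using insert fin_char_span_sum fin_char_span_subset_Mweak[OF p] by blast+
  from linear[rule_format, OF this, of "a n" 1]
  have "AE x in M. T (\<lambda>y. a n * g n y + 1 * (\<Sum>n\<in>S. a n * g n y)) x =
      a n * T (g n) x + 1 * T (\<lambda>y. \<Sum>n\<in>S. a n * g n y) x" .
  moreover have "AE x in M. T (\<lambda>y. \<Sum>n\<in>S. a n * g n y) x = (\<Sum>n\<in>S. a n * T (g n) x)"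
    using insert by simp
  ultimately show ?case
  proof eventually_elim
    case (elim x)
    with insert.hyps show ?case by simp
  qed
qed

lemma sum_eq_summand_if_pairwise_mult_zero:
  fixes v :: "'i \<Rightarrow> 'a::semiring_no_zero_divisors"
  assumes "finite I" "\<forall>i\<in>I. \<forall>j\<in>I. i \<noteq> j \<longrightarrow> v i * v j = 0" "i \<in> I" "v i \<noteq> 0"
  shows "sum v I = v i"
proof -
  have "v j = 0" if "j \<in> I - {i}" for j
    using assms that by (metis Diff_iff insertI1 mult_eq_0_iff)
  then show ?thesis
    using assms by (simp add: sum.remove)
qed

lemma emeasure_abs_greater_sum_disjoint_le:
  fixes g :: "'i \<Rightarrow> 'a \<Rightarrow> real"
  assumes s: "s \<ge> 0" and I: "finite I"
    and meas: "\<forall>i\<in>I. g i \<in> borel_measurable M"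
    and disj: "AE x in M. \<forall>i\<in>I. \<forall>j\<in>I. i \<noteq> j \<longrightarrow> g i x * g j x = 0"
    and f: "AE x in M. f x = (\<Sum>i\<in>I. g i x)"
  shows "emeasure M {x \<in> space M. s < \<bar>f x\<bar>} \<le> (\<Sum>i\<in>I. emeasure M {x \<in> space M. s < \<bar>g i x\<bar>})"
proof -
  define E where "E i = {x \<in> space M. s < \<bar>g i x\<bar>}" for i
  have E: "E i \<in> sets M" if "i \<in> I" for i
    using borel_measurable_abs[of "g i"] meas that
    unfolding E_def borel_measurable_iff_greater by blast
  have "AE x in M. x \<in> {x \<in> space M. s < \<bar>f x\<bar>} \<longrightarrow> x \<in> (\<Union>i\<in>I. E i)"
    using disj f
  proof eventually_elim
    case (elim x)
    show ?case
    proof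
      assume x: "x \<in> {x \<in> space M. s < \<bar>f x\<bar>}"
      with s elim(2) have "(\<Sum>i\<in>I. g i x) \<noteq> 0" by auto
      then obtain i where i: "i \<in> I" "g i x \<noteq> 0"
        by (meson sum.neutral)
      then have "f x = g i x"
        using elim I by (simp add: sum_eq_summand_if_pairwise_mult_zero)
      with x i show "x \<in> (\<Union>i\<in>I. E i)"
        unfolding E_def by auto
    qed
  qed
  then have "emeasure M {x \<in> space M. s < \<bar>f x\<bar>} \<le> emeasure M (\<Union>i\<in>I. E i)"
    using E I by (intro emeasure_mono_AE) auto
  also have "\<dots> \<le> (\<Sum>i\<in>I. emeasure M (E i))"
    using E I by (intro emeasure_subadditive_finite) auto
  finally show ?thesis
    unfolding E_def .
qed

lemma weak_norm_sum_disjoint_le: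
  fixes g :: "'i \<Rightarrow> 'a \<Rightarrow> real"
  assumes p: "p > 0" and w: "w \<ge> 0" and I: "finite I"
    and meas: "\<forall>i\<in>I. g i \<in> borel_measurable M"
    and norm: "\<forall>i\<in>I. weak_norm M p (g i) \<le> ennreal w"
    and disj: "AE x in M. \<forall>i\<in>I. \<forall>j\<in>I. i \<noteq> j \<longrightarrow> g i x * g j x = 0"
    and f: "AE x in M. f x = (\<Sum>i\<in>I. g i x)"
  shows "weak_norm M p f \<le> ennreal (card I powr (1 / p) * w)"
  unfolding weak_norm_le_iff[OF p mult_nonneg_nonneg[OF powr_ge_zero w]]
proof (intro allI impI)
  fix s :: real assume s: "s > 0"
  have "emeasure M {x \<in> space M. s < \<bar>f x\<bar>} \<le> (\<Sum>i\<in>I. emeasure M {x \<in> space M. s < \<bar>g i x\<bar>})"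
    using s I meas disj f by (intro emeasure_abs_greater_sum_disjoint_le) auto
  also have "\<dots> \<le> (\<Sum>i\<in>I. ennreal ((w / s) powr p))"
    using norm s by (intro sum_mono) (simp add: weak_norm_le_iff[OF p w])
  also have "\<dots> = ennreal (card I * (w / s) powr p)"
    by (simp add: ennreal_of_nat_eq_real_of_nat ennreal_mult')
  also have "card I * (w / s) powr p = (card I powr (1 / p) * (w / s)) powr p"
    using p w s by (subst powr_mult) (simp_all add: powr_powr)
  finally show "emeasure M {x \<in> space M. s < \<bar>f x\<bar>} \<le>
      ennreal ((card I powr (1 / p) * w / s) powr p)"
    by simp
qed

section \<open>Rademacher sums\<close>

definition bit_sign :: "nat \<Rightarrow> nat \<Rightarrow> real" where
  "bit_sign b i = (if odd (b div 2^i) then -1 else 1)"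

definition rademacher_sum :: "nat \<Rightarrow> (nat \<Rightarrow> real) \<Rightarrow> nat \<Rightarrow> real" where
  "rademacher_sum N c b = (\<Sum>i<N. c i * bit_sign b i)"

lemma abs_bit_sign: "\<bar>bit_sign b i\<bar> = 1"
  by (simp add: bit_sign_def)

lemma bit_sign_mult_pow2_add:
  assumes "b < 2^N" "i < N"
  shows "bit_sign (t * 2^N + b) i = bit_sign b i"
proof -
  have "(2::nat)^N = 2^(N - i) * 2^i"
    using assms by (simp flip: power_add)
  then have "(t * 2^N + b) div 2^i = (b + t * 2^(N - i) * 2^i) div 2^i"
    by (simp add: mult.assoc add.commute)
  also have "\<dots> = b div 2^i + t * 2^(N - i)"
    by simp
  finally show ?thesis
    using assms unfolding bit_sign_def by simp
qed

lemma sum_lessThan_pow2_Suc: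
  fixes f :: "nat \<Rightarrow> 'a::comm_monoid_add"
  shows "(\<Sum>b<2^Suc N. f b) = (\<Sum>b<2^N. f b + f (b + 2^N))"
proof -
  have "(2::nat)^Suc N = 2 * 2^N" by simp
  then show ?thesis
    by (simp only: sum_mult_product) (simp add: numeral_2_eq_2 sum.distrib)
qed

lemma sum_lessThan_rotate:
  fixes g :: "nat \<Rightarrow> 'a::comm_monoid_add"
  shows "(\<Sum>t<N. g ((t + 1) mod N)) = (\<Sum>t<N. g t)"
proof (cases N)
  case (Suc M)
  have "(\<Sum>t<M. g ((t + 1) mod Suc M)) = (\<Sum>t<M. g (Suc t))"
    by (intro sum.cong) auto
  then have "(\<Sum>t<Suc M. g ((t + 1) mod Suc M)) = (\<Sum>t<M. g (Suc t)) + g 0"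
    by (simp only: sum.lessThan_Suc) simp
  also have "\<dots> = (\<Sum>t<Suc M. g t)"
    by (simp only: sum.lessThan_Suc_shift add.commute)
  finally show ?thesis
    using Suc by simp
qed simp

lemma sum_lessThan_mod_shift:
  fixes f :: "nat \<Rightarrow> 'a::comm_monoid_add"
  shows "(\<Sum>t<N. f ((t + i) mod N)) = (\<Sum>t<N. f t)"
proof (induction i)
  case (Suc i)
  have "(\<Sum>t<N. f ((t + Suc i) mod N)) = (\<Sum>t<N. f (((t + 1) mod N + i) mod N))"
    by (simp add: mod_add_left_eq)
  also have "\<dots> = (\<Sum>t<N. f ((t + i) mod N))"
    by (rule sum_lessThan_rotate)
  finally show ?case
    using Suc by simp
qed (intro sum.cong; simp)

lemma sum_rademacher_sum_Suc:
  "(\<Sum>b<2^Suc N. h (rademacher_sum (Suc N) c b)) =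
    (\<Sum>b<2^N. h (rademacher_sum N c b + c N) + h (rademacher_sum N c b - c N))"
  unfolding sum_lessThan_pow2_Suc
proof (rule sum.cong)
  fix b :: nat assume "b \<in> {..<2^N}"
  then have b: "b < 2^N" by simp
  have "rademacher_sum (Suc N) c b = rademacher_sum N c b + c N"
    using b by (simp add: rademacher_sum_def bit_sign_def)
  moreover have "rademacher_sum (Suc N) c (b + 2^N) = rademacher_sum N c b - c N"
    using b bit_sign_mult_pow2_add[OF b, of _ 1]
    by (simp add: rademacher_sum_def bit_sign_def add.commute)
  ultimately show "h (rademacher_sum (Suc N) c b) + h (rademacher_sum (Suc N) c (b + 2^N)) =
      h (rademacher_sum N c b + c N) + h (rademacher_sum N c b - c N)"
    by simp
qed simp

lemma sum_rademacher_sum_power2: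
  "(\<Sum>b<2^N. (rademacher_sum N c b)^2) = 2^N * (\<Sum>i<N. (c i)^2)"
proof (induction N)
  case 0
  then show ?case by (simp add: rademacher_sum_def)
next
  case (Suc N)
  have "(\<Sum>b<2^Suc N. (rademacher_sum (Suc N) c b)^2) =
      (\<Sum>b<2^N. (rademacher_sum N c b + c N)^2 + (rademacher_sum N c b - c N)^2)"
    by (rule sum_rademacher_sum_Suc)
  also have "\<dots> = (\<Sum>b<2^N. 2 * (rademacher_sum N c b)^2 + 2 * (c N)^2)"
    by (simp add: power2_eq_square algebra_simps)
  also have "\<dots> = 2^Suc N * (\<Sum>i<Suc N. (c i)^2)"
    by (simp add: sum.distrib Suc flip: sum_distrib_left) (simp add: algebra_simps)
  finally show ?case .
qed

lemma sum_rademacher_sum_power4_le: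
  "(\<Sum>b<2^N. (rademacher_sum N c b)^4) \<le> 3 * 2^N * (\<Sum>i<N. (c i)^2)^2"
proof (induction N)
  case 0
  then show ?case by (simp add: rademacher_sum_def)
next
  case (Suc N)
  define S where "S = (\<Sum>i<N. (c i)^2)"
  have "(\<Sum>b<2^Suc N. (rademacher_sum (Suc N) c b)^4) =
      (\<Sum>b<2^N. (rademacher_sum N c b + c N)^4 + (rademacher_sum N c b - c N)^4)"
    by (rule sum_rademacher_sum_Suc)
  also have "\<dots> = (\<Sum>b<2^N. 2 * (rademacher_sum N c b)^4 +
      12 * (c N)^2 * (rademacher_sum N c b)^2 + 2 * (c N)^4)"
    by (rule sum.cong) (simp_all add: power4_eq_xxxx power2_eq_square algebra_simps)
  also have "\<dots> = 2 * (\<Sum>b<2^N. (rademacher_sum N c b)^4) +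
      12 * (c N)^2 * (2^N * S) + 2 * 2^N * (c N)^4"
    by (simp add: sum.distrib S_def flip: sum_distrib_left sum_rademacher_sum_power2)
  also have "\<dots> \<le> 2 * (3 * 2^N * S^2) + 12 * (c N)^2 * (2^N * S) + 2 * 2^N * (c N)^4"
    using Suc by (simp add: S_def)
  also have "\<dots> \<le> 3 * 2^Suc N * (S + (c N)^2)^2"
  proof -
    have "0 \<le> (c N)^4 * 2^N" by simp
    then show ?thesis by (simp add: power2_eq_square power4_eq_xxxx algebra_simps)
  qed
  finally show ?case
    by (simp add: S_def)
qed

lemma paley_zygmund_rademacher_sum:
  fixes c :: "nat \<Rightarrow> real" and N :: nat
  defines "S \<equiv> \<Sum>i<N. (c i)^2"
  assumes S: "S > 0"
  shows "3 * 2^N \<le> 16 * real (card {b. b < 2^N \<and> S / 4 < (rademacher_sum N c b)^2})"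
proof -
  define X where "X b = (rademacher_sum N c b)^2" for b
  define A where "A = {b. b < 2^N \<and> S / 4 < X b}"
  have A: "A \<subseteq> {..<2^N}" "finite A"
    unfolding A_def by auto
  have "2^N * S = (\<Sum>b<2^N. X b)"
    by (simp add: X_def S_def sum_rademacher_sum_power2)
  also have "\<dots> = (\<Sum>b\<in>A. X b) + (\<Sum>b\<in>{..<2^N} - A. X b)"
    using A sum.subset_diff[of A "{..<2^N}" X] by simp
  also have "(\<Sum>b\<in>{..<2^N} - A. X b) \<le> (\<Sum>b\<in>{..<2^N} - A. S / 4)"
    by (rule sum_mono) (auto simp: A_def not_less)
  also have "\<dots> \<le> (\<Sum>b\<in>{..<(2::nat)^N}. S / 4)"
    using S by (intro sum_mono2) auto
  finally have first: "3 / 4 * 2^N * S \<le> (\<Sum>b\<in>A. X b)"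
    by simp
  have "(\<Sum>b\<in>A. 1 * X b)^2 \<le> (\<Sum>b\<in>A. 1^2) * (\<Sum>b\<in>A. (X b)^2)"
    by (rule Cauchy_Schwarz_ineq_sum)
  also have "(\<Sum>b\<in>A. (X b)^2) \<le> (\<Sum>b<2^N. (X b)^2)"
    using A by (intro sum_mono2) auto
  also have "\<dots> = (\<Sum>b<2^N. (rademacher_sum N c b)^4)"
    by (simp add: X_def flip: power_mult)
  also have "\<dots> \<le> 3 * 2^N * S^2"
    unfolding S_def by (rule sum_rademacher_sum_power4_le)
  finally have second: "(\<Sum>b\<in>A. X b)^2 \<le> card A * (3 * 2^N * S^2)"
    by (simp add: mult_left_mono)
  have "(3 / 4 * 2^N * S)^2 \<le> (\<Sum>b\<in>A. X b)^2"
    using first S by (intro power_mono) auto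
  with second have "(9 / 16 * 2^N) * (2^N * S^2) \<le> (3 * card A) * (2^N * S^2)"
    by (simp add: power2_eq_square algebra_simps)
  then show ?thesis
    using S by (simp add: A_def X_def)
qed

section \<open>Dyadic intervals\<close>

definition dyadic_index :: "nat \<Rightarrow> real \<Rightarrow> nat" where
  "dyadic_index K x = nat \<lfloor>2^K * x\<rfloor>"

definition dyadic_interval :: "nat \<Rightarrow> nat \<Rightarrow> real set" where
  "dyadic_interval K w = {real w / 2^K ..< (real w + 1) / 2^K}"

lemma dyadic_index_eq_iff:
  assumes "0 \<le> x"
  shows "dyadic_index K x = w \<longleftrightarrow> x \<in> dyadic_interval K w"
proof -
  have "dyadic_index K x = w \<longleftrightarrow> real w \<le> 2^K * x \<and> 2^K * x < real w + 1"
    using assms by (auto simp: dyadic_index_def floor_eq_iff nat_eq_iff)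
  then show ?thesis
    by (simp add: dyadic_interval_def field_simps)
qed

lemma indicator_dyadic_interval:
  "0 \<le> x \<Longrightarrow> indicator (dyadic_interval K w) x = (if dyadic_index K x = w then 1 else 0)"
  by (simp add: dyadic_index_eq_iff)

lemma dyadic_index_less: "0 \<le> x \<Longrightarrow> x < 1 \<Longrightarrow> dyadic_index K x < 2^K"
  by (simp add: dyadic_index_def nat_less_iff floor_less_iff)

lemma dyadic_index_div:
  assumes "0 \<le> x" "a \<le> K"
  shows "dyadic_index K x div 2^a = dyadic_index (K - a) x"
proof -
  have "\<lfloor>2^K * x\<rfloor> div 2^a = \<lfloor>2^K * x / 2^a\<rfloor>"
    using floor_divide_real_eq_div[of "2^a" "2^K * x"] by simp
  also have "2^K * x / 2^a = 2^(K - a) * x"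
    using assms by (simp add: power_diff)
  finally have "\<lfloor>2^K * x\<rfloor> div 2^a = \<lfloor>2^(K - a) * x\<rfloor>" .
  moreover have "dyadic_index K x div 2^a = nat (\<lfloor>2^K * x\<rfloor> div 2^a)"
    using assms by (simp add: dyadic_index_def nat_div_distrib nat_power_eq)
  ultimately show ?thesis
    by (simp add: dyadic_index_def)
qed

lemma dyadic_interval_subset:
  assumes "w < 2^K"
  shows "dyadic_interval K w \<subseteq> {0..<1}"
proof -
  have "real w + 1 \<le> 2^K"
    using assms by (metis Suc_leI of_nat_Suc of_nat_le_iff of_nat_numeral of_nat_power add.commute)
  then show ?thesis
    unfolding dyadic_interval_def by (auto simp: field_simps intro: order_trans[rotated])
qed

lemma dyadic_interval_nonneg:
  assumes "x \<in> dyadic_interval K w"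
  shows "0 \<le> x"
proof -
  have "0 \<le> real w / 2^K" by simp
  with assms show ?thesis
    unfolding dyadic_interval_def atLeastLessThan_iff by linarith
qed

lemma dyadic_index_eqI: "x \<in> dyadic_interval K w \<Longrightarrow> dyadic_index K x = w"
  using dyadic_index_eq_iff[OF dyadic_interval_nonneg] by blast

lemma dyadic_interval_disjoint: "v \<noteq> w \<Longrightarrow> dyadic_interval K v \<inter> dyadic_interval K w = {}"
  using dyadic_index_eqI by blast

lemma dyadic_interval_in_sets:
  assumes "w < 2^K"
  shows "dyadic_interval K w \<in> sets (lebesgue_on {0..1})"
proof -
  have "dyadic_interval K w \<in> sets lebesgue"
    by (simp add: dyadic_interval_def)
  with dyadic_interval_subset[OF assms] show ?thesis
    by (subst sets_restrict_space_iff) auto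
qed

lemma emeasure_dyadic_interval:
  assumes "w < 2^K"
  shows "emeasure (lebesgue_on {0..1}) (dyadic_interval K w) = ennreal (1 / 2^K)"
proof -
  have "emeasure (lebesgue_on {0..1}) (dyadic_interval K w) =
      emeasure lebesgue (dyadic_interval K w)"
    using dyadic_interval_subset[OF assms] by (intro emeasure_restrict_space) auto
  also have "\<dots> = emeasure lborel (dyadic_interval K w)"
    by (simp add: dyadic_interval_def)
  also have "\<dots> = ennreal (1 / 2^K)"
    unfolding dyadic_interval_def
    by (subst emeasure_lborel_Ico) (simp_all add: divide_right_mono flip: diff_divide_distrib)
  finally show ?thesis .
qed

lemma emeasure_dyadic_index_preimage:
  "emeasure (lebesgue_on {0..1}) {x \<in> {0..1}. x < 1 \<and> P (dyadic_index K x)} =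
    ennreal (card {w. w < 2^K \<and> P w} / 2^K)"
proof -
  define W where "W = {w. w < 2^K \<and> P w}"
  have "{x \<in> {0..1}. x < 1 \<and> P (dyadic_index K x)} = (\<Union>w\<in>W. dyadic_interval K w)"
  proof (intro set_eqI iffI)
    fix x assume x: "x \<in> {x \<in> {0..1}. x < 1 \<and> P (dyadic_index K x)}"
    then have "x \<in> dyadic_interval K (dyadic_index K x)"
      by (simp add: dyadic_index_eq_iff[symmetric])
    with x dyadic_index_less[of x K] show "x \<in> (\<Union>w\<in>W. dyadic_interval K w)"
      by (auto simp: W_def)
  next
    fix x assume "x \<in> (\<Union>w\<in>W. dyadic_interval K w)"
    then obtain w where "w \<in> W" "x \<in> dyadic_interval K w" by blast
    then show "x \<in> {x \<in> {0..1}. x < 1 \<and> P (dyadic_index K x)}"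
      using dyadic_interval_subset[of w K] dyadic_index_eqI by (auto simp: W_def)
  qed
  also have "emeasure (lebesgue_on {0..1}) (\<Union>w\<in>W. dyadic_interval K w) =
      (\<Sum>w\<in>W. emeasure (lebesgue_on {0..1}) (dyadic_interval K w))"
    using dyadic_interval_in_sets dyadic_interval_disjoint
    by (intro sum_emeasure[symmetric]) (auto simp: W_def disjoint_family_on_def)
  also have "\<dots> = (\<Sum>w\<in>W. ennreal (1 / 2^K))"
    by (intro sum.cong) (auto simp: W_def emeasure_dyadic_interval)
  also have "\<dots> = ennreal (card W / 2^K)"
    by (simp add: ennreal_of_nat_eq_real_of_nat flip: ennreal_mult')
  finally show ?thesis
    by (simp add: W_def)
qed

(* The right endpoint 1 lies in no dyadic interval, hence the hypothesis f 1 = 0. *)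
lemma emeasure_abs_greater_dyadic_step:
  fixes f :: "real \<Rightarrow> real" and F :: "nat \<Rightarrow> real"
  assumes f1: "f 1 = 0" and s: "s \<ge> 0"
    and step: "\<And>x. 0 \<le> x \<Longrightarrow> x < 1 \<Longrightarrow> f x = F (dyadic_index K x)"
  shows "emeasure (lebesgue_on {0..1}) {x \<in> space (lebesgue_on {0..1}). s < \<bar>f x\<bar>} =
    ennreal ((\<Sum>w<2^K. of_bool (s < \<bar>F w\<bar>)) / 2^K)"
proof -
  have "{x \<in> space (lebesgue_on {0..1}). s < \<bar>f x\<bar>} =
      {x \<in> {0..1}. x < 1 \<and> s < \<bar>F (dyadic_index K x)\<bar>}"
  proof (intro set_eqI iffI)
    fix x assume x: "x \<in> {x \<in> space (lebesgue_on {0..1}). s < \<bar>f x\<bar>}"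
    with f1 s have "x \<noteq> 1" by auto
    with x step show "x \<in> {x \<in> {0..1}. x < 1 \<and> s < \<bar>F (dyadic_index K x)\<bar>}"
      by auto
  next
    fix x assume "x \<in> {x \<in> {0..1}. x < 1 \<and> s < \<bar>F (dyadic_index K x)\<bar>}"
    with step show "x \<in> {x \<in> space (lebesgue_on {0..1}). s < \<bar>f x\<bar>}"
      by auto
  qed
  then have "emeasure (lebesgue_on {0..1}) {x \<in> space (lebesgue_on {0..1}). s < \<bar>f x\<bar>} =
      ennreal (card {w. w < 2^K \<and> s < \<bar>F w\<bar>} / 2^K)"
    by (simp only: emeasure_dyadic_index_preimage[where P = "\<lambda>w. s < \<bar>F w\<bar>"])
  also have "real (card {w. w < 2^K \<and> s < \<bar>F w\<bar>}) = (\<Sum>w<2^K. of_bool (s < \<bar>F w\<bar>))"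
    by (simp add: sum_of_bool_eq Int_def)
  finally show ?thesis .
qed

section \<open>Haar functions on dyadic intervals\<close>

lemma pow2_offset_unique:
  fixes k k' l l' :: nat
  assumes "2^k + l = 2^k' + l'" "1 \<le> l" "l \<le> 2^k" "1 \<le> l'" "l' \<le> 2^k'"
  shows "k = k'"
proof (rule ccontr)
  assume "k \<noteq> k'"
  then consider "k < k'" | "k' < k" by linarith
  then show False
  proof cases
    case 1
    then have "(2::nat)^(k + 1) \<le> 2^k'" by (intro power_increasing) auto
    then show False using assms by simp
  next
    case 2
    then have "(2::nat)^(k' + 1) \<le> 2^k" by (intro power_increasing) auto
    then show False using assms by simp
  qed
qed

lemma ex_haar_index_iff:
  fixes k l :: nat and Q :: "nat \<Rightarrow> nat \<Rightarrow> bool"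
  assumes "l < 2^k"
  shows "(\<exists>k' l'. 2^k + l + 1 = 2^k' + l' \<and> 1 \<le> l' \<and> l' \<le> 2^k' \<and> Q k' l') \<longleftrightarrow> Q k (l + 1)"
proof
  assume "\<exists>k' l'. 2^k + l + 1 = 2^k' + l' \<and> 1 \<le> l' \<and> l' \<le> 2^k' \<and> Q k' l'"
  then obtain k' l' :: nat where kl: "2^k + l + 1 = 2^k' + l'" "1 \<le> l'" "l' \<le> 2^k'" "Q k' l'"
    by blast
  moreover have "k = k'"
    using pow2_offset_unique[of k "l + 1" k' l'] kl assms by simp
  ultimately show "Q k (l + 1)" by simp
next
  assume "Q k (l + 1)"
  with assms show "\<exists>k' l'. 2^k + l + 1 = 2^k' + l' \<and> 1 \<le> l' \<and> l' \<le> 2^k' \<and> Q k' l'"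
    by (intro exI[of _ k] exI[of _ "l + 1"]) simp
qed

lemma haar_level:
  assumes l: "l < 2^k"
  shows "haar (2^k + l + 1) x =
    indicator (dyadic_interval (k + 1) (2 * l)) x -
    indicator (dyadic_interval (k + 1) (2 * l + 1)) x"
proof -
  have "(2 * real (l + 1) - 2) / 2^(k + 1) \<le> x \<and> x < (2 * real (l + 1) - 1) / 2^(k + 1) \<longleftrightarrow>
      x \<in> dyadic_interval (k + 1) (2 * l)"
    "(2 * real (l + 1) - 1) / 2^(k + 1) \<le> x \<and> x < (2 * real (l + 1)) / 2^(k + 1) \<longleftrightarrow>
      x \<in> dyadic_interval (k + 1) (2 * l + 1)"
    by (simp_all add: dyadic_interval_def algebra_simps)
  moreover have "x \<notin> dyadic_interval (k + 1) (2 * l) \<or> x \<notin> dyadic_interval (k + 1) (2 * l + 1)"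
    using dyadic_interval_disjoint[of "2 * l" "2 * l + 1" "k + 1"] by auto
  ultimately show ?thesis
    unfolding haar_def ex_haar_index_iff[OF l] by (auto simp: indicator_def)
qed

lemma haar_level_eq_dyadic_index:
  assumes "0 \<le> x" "l < 2^k"
  shows "haar (2^k + l + 1) x =
    (if dyadic_index (k + 1) x = 2 * l then 1
     else if dyadic_index (k + 1) x = 2 * l + 1 then -1 else 0)"
  unfolding haar_level[OF assms(2)] using assms(1) by (simp add: indicator_dyadic_interval)

lemma sum_haar_level:
  assumes x: "0 \<le> x" "x < 1"
  shows "(\<Sum>l<2^k. a l * haar (2^k + l + 1) x) =
    a (dyadic_index (k + 1) x div 2) * (if even (dyadic_index (k + 1) x) then 1 else -1)"
proof -
  define d where "d = dyadic_index (k + 1) x"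
  have "d div 2 < 2^k"
    using dyadic_index_less[OF x, of "k + 1"] by (simp add: d_def less_mult_imp_div_less)
  have "(\<Sum>l<2^k. a l * haar (2^k + l + 1) x) =
      (\<Sum>l<2^k. if l = d div 2 then a (d div 2) * (if even d then 1 else -1) else 0)"
  proof (rule sum.cong)
    fix l assume "l \<in> {..<(2::nat)^k}"
    then show "a l * haar (2^k + l + 1) x =
        (if l = d div 2 then a (d div 2) * (if even d then 1 else -1) else 0)"
      using haar_level_eq_dyadic_index[OF x(1), of l k] unfolding d_def[symmetric] by auto
  qed simp
  also have "\<dots> = a (d div 2) * (if even d then 1 else -1)"
    using \<open>d div 2 < 2^k\<close> by simp
  finally show ?thesis
    by (simp only: d_def)
qed

lemma haar_level_at_1:
  assumes "l < 2^k"
  shows "haar (2^k + l + 1) 1 = 0"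
  unfolding haar_level[OF assms]
  using assms dyadic_interval_subset[of "2 * l" "k + 1"]
    dyadic_interval_subset[of "2 * l + 1" "k + 1"]
  by (auto simp: indicator_def)

lemma haar_level_in_fin_char_span:
  assumes "l < 2^k"
  shows "haar (2^k + l + 1) \<in> fin_char_span (lebesgue_on {0..1})"
proof -
  have "indicator (dyadic_interval (k + 1) w) \<in> fin_char_span (lebesgue_on {0..1})"
    if "w < 2^(k + 1)" for w
    using that by (intro fin_char_span_indicator)
      (simp_all add: dyadic_interval_in_sets emeasure_dyadic_interval)
  moreover have "2 * l < 2^(k + 1)" "2 * l + 1 < 2^(k + 1)"
    using assms by simp_all
  ultimately have "(\<lambda>x. 1 * indicator (dyadic_interval (k + 1) (2 * l)) x +
      (-1) * indicator (dyadic_interval (k + 1) (2 * l + 1)) x)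
    \<in> fin_char_span (lebesgue_on {0..1})"
    by (intro fin_char_span_lincomb)
  moreover have "haar (2^k + l + 1) = (\<lambda>x. 1 * indicator (dyadic_interval (k + 1) (2 * l)) x +
      (-1) * indicator (dyadic_interval (k + 1) (2 * l + 1)) x)"
    by (rule ext) (subst haar_level[OF assms], simp)
  ultimately show ?thesis
    by simp
qed

section \<open>The test functions\<close>

definition test_weight :: "nat \<Rightarrow> nat \<Rightarrow> real" where
  "test_weight m u = sqrt (2^m / (real u + 1))"

lemma sum_test_weight_power2: "(\<Sum>u<2^m. (test_weight m u)^2) = 2^m * harm (2^m)"
  by (simp add: test_weight_def harm_altdef sum_distrib_left field_simps)

lemma sum_test_weight_greater_le:
  assumes s: "s > 0"
  shows "(\<Sum>u<2^m. of_bool (s < test_weight m u)) \<le> 2^m / s^2"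
proof -
  define y where "y = 2^m / s^2"
  have "{u. u < 2^m \<and> s < test_weight m u} \<subseteq> {..<nat \<lceil>y - 1\<rceil>}"
  proof
    fix u assume "u \<in> {u. u < 2^m \<and> s < test_weight m u}"
    then have "s^2 < (test_weight m u)^2"
      using s by (intro power_strict_mono) auto
    then have "real u + 1 < y"
      using s by (simp add: test_weight_def y_def field_simps)
    then show "u \<in> {..<nat \<lceil>y - 1\<rceil>}"
      using less_ceiling_iff[of "int u + 1" y] by (simp add: zless_nat_eq_int_zless)
  qed
  then have "card {u. u < 2^m \<and> s < test_weight m u} \<le> nat \<lceil>y - 1\<rceil>"
    by (metis card_lessThan card_mono finite_lessThan)
  moreover have "real (nat \<lceil>y - 1\<rceil>) \<le> y"
    using s by (simp add: y_def)
  ultimately show ?thesis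
    by (simp add: sum_of_bool_eq Int_def y_def)
qed

definition test_depth :: "nat \<Rightarrow> nat" where
  "test_depth m = m + 2^m"

definition block_level :: "nat \<Rightarrow> nat \<Rightarrow> nat" where
  "block_level m i = m + 2^m - 1 - i"

(* The index l div 2 ^ (2 ^ m - 1 - i) consists of the first m binary digits of the support of
   the l-th Haar function on block_level m i. So at x the block is the weight of the first m
   digits of x, rotated by i, times the sign given by a digit of x (haar_block_eq). *)
definition block_coeff :: "nat \<Rightarrow> nat \<Rightarrow> nat \<Rightarrow> real" where
  "block_coeff m i l = test_weight m ((l div 2^(2^m - 1 - i) + i) mod 2^m)"

definition haar_block :: "nat \<Rightarrow> nat \<Rightarrow> real \<Rightarrow> real" where
  "haar_block m i =
    (\<lambda>y. \<Sum>l<2^block_level m i. block_coeff m i l * haar (2^block_level m i + l + 1) y)"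

definition haar_test :: "nat \<Rightarrow> real \<Rightarrow> real" where
  "haar_test m = (\<lambda>y. \<Sum>i<2^m. haar_block m i y)"

lemma haar_block_eq:
  assumes x: "0 \<le> x" "x < 1" and i: "i < 2^m"
  shows "haar_block m i x =
    test_weight m ((dyadic_index (test_depth m) x div 2^(2^m) + i) mod 2^m) *
    bit_sign (dyadic_index (test_depth m) x) i"
proof -
  define k where "k = block_level m i"
  define d where "d = dyadic_index (test_depth m) x"
  have k: "k + 1 = test_depth m - i" "i \<le> test_depth m"
    using i by (simp_all add: k_def block_level_def test_depth_def)
  have "dyadic_index (k + 1) x = d div 2^i"
    unfolding d_def k using dyadic_index_div[OF x(1) k(2)] ..
  moreover have "d div 2^i div 2 div 2^(2^m - 1 - i) = d div 2^(2^m)"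
  proof -
    have "i + 1 + (2^m - 1 - i) = 2^m"
      using i by simp
    then show ?thesis
      by (metis div_mult2_eq power_add power_one_right)
  qed
  ultimately show ?thesis
    unfolding haar_block_def k_def[symmetric] sum_haar_level[OF x] d_def[symmetric]
    by (simp add: block_coeff_def bit_sign_def)
qed

lemma haar_block_at_1: "haar_block m i 1 = 0"
  unfolding haar_block_def
proof (intro sum.neutral ballI)
  fix l :: nat assume "l \<in> {..<2^block_level m i}"
  then show "block_coeff m i l * haar (2^block_level m i + l + 1) 1 = 0"
    using haar_level_at_1[of l "block_level m i"] by simp
qed

lemma haar_block_in_fin_char_span: "haar_block m i \<in> fin_char_span (lebesgue_on {0..1})"
  unfolding haar_block_def by (intro fin_char_span_sum ballI haar_level_in_fin_char_span) auto

lemma haar_test_in_fin_char_span: "haar_test m \<in> fin_char_span (lebesgue_on {0..1})"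
  using haar_block_in_fin_char_span fin_char_span_sum[of "{..<2^m}" "haar_block m" _ "\<lambda>_. 1"]
  by (simp add: haar_test_def)

lemma two_power_test_depth: "(2::real)^test_depth m = 2^m * 2^2^m"
  by (simp add: test_depth_def power_add)

lemma weak_norm_haar_block_le:
  assumes i: "i < 2^m"
  shows "weak_norm (lebesgue_on {0..1}) 2 (haar_block m i) \<le> 1"
proof -
  define B :: nat where "B = 2^2^m"
  define F where "F w = test_weight m ((w div B + i) mod 2^m) * bit_sign w i" for w
  have "emeasure (lebesgue_on {0..1}) {x \<in> space (lebesgue_on {0..1}). s < \<bar>haar_block m i x\<bar>}
      \<le> ennreal ((1 / s) powr 2)" if s: "s > 0" for s
  proof -
    have "(\<Sum>w<2^test_depth m. of_bool (s < \<bar>F w\<bar>)) =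
        (\<Sum>t<2^m. \<Sum>b<B. of_bool (s < \<bar>F (b + t * B)\<bar>) :: real)"
      by (simp add: test_depth_def power_add B_def sum_mult_product)
    also have "\<dots> = (\<Sum>t<2^m. real B * of_bool (s < test_weight m ((t + i) mod 2^m)))"
      by (intro sum.cong) (simp_all add: F_def abs_mult abs_bit_sign test_weight_def B_def)
    also have "\<dots> = real B * (\<Sum>u<2^m. of_bool (s < test_weight m u))"
      using sum_lessThan_mod_shift[where f = "\<lambda>u. real B * of_bool (s < test_weight m u)"]
      by (simp only: sum_distrib_left)
    also have "\<dots> \<le> real B * (2^m / s^2)"
      using s by (intro mult_left_mono sum_test_weight_greater_le) auto
    finally have bound: "(\<Sum>w<2^test_depth m. of_bool (s < \<bar>F w\<bar>)) / 2^test_depth m \<le> (1 / s) powr 2"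
      using s by (simp add: two_power_test_depth B_def field_simps)
    have "haar_block m i x = F (dyadic_index (test_depth m) x)" if "0 \<le> x" "x < 1" for x
      unfolding F_def B_def using haar_block_eq[OF that i] .
    then have "emeasure (lebesgue_on {0..1})
          {x \<in> space (lebesgue_on {0..1}). s < \<bar>haar_block m i x\<bar>} =
        ennreal ((\<Sum>w<2^test_depth m. of_bool (s < \<bar>F w\<bar>)) / 2^test_depth m)"
      using s by (intro emeasure_abs_greater_dyadic_step haar_block_at_1) auto
    also have "\<dots> \<le> ennreal ((1 / s) powr 2)"
      using bound by (rule ennreal_leI)
    finally show ?thesis .
  qed
  then have "weak_norm (lebesgue_on {0..1}) 2 (haar_block m i) \<le> ennreal 1"
    by (subst weak_norm_le_iff) auto
  then show ?thesis
    by simp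
qed

definition haar_test_step :: "nat \<Rightarrow> nat \<Rightarrow> real" where
  "haar_test_step m w = (\<Sum>i<2^m. test_weight m ((w div 2^2^m + i) mod 2^m) * bit_sign w i)"

lemma haar_test_eq:
  "0 \<le> x \<Longrightarrow> x < 1 \<Longrightarrow> haar_test m x = haar_test_step m (dyadic_index (test_depth m) x)"
  by (simp add: haar_test_def haar_test_step_def haar_block_eq)

lemma haar_test_step_eq:
  assumes "b < 2^2^m"
  shows "haar_test_step m (b + t * 2^2^m) =
    rademacher_sum (2^m) (\<lambda>i. test_weight m ((t + i) mod 2^m)) b"
  unfolding haar_test_step_def rademacher_sum_def
  using assms bit_sign_mult_pow2_add[OF assms] by (intro sum.cong) (simp_all add: add.commute)

lemma haar_test_step_large_count:
  fixes m :: nat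
  defines "s \<equiv> sqrt (2^m * harm (2^m) / 4)"
  shows "3 / 16 \<le> (\<Sum>w<2^test_depth m. of_bool (s < \<bar>haar_test_step m w\<bar>)) / (2::real)^test_depth m"
proof -
  define S :: real where "S = 2^m * harm (2^m)"
  define B :: nat where "B = 2^2^m"
  have large_iff: "s < \<bar>X\<bar> \<longleftrightarrow> S / 4 < X^2" for X
    unfolding s_def S_def real_sqrt_abs[symmetric] real_sqrt_less_iff ..
  have "3 * real B / 16 \<le> (\<Sum>b<B. of_bool (s < \<bar>haar_test_step m (b + t * B)\<bar>))" for t
  proof -
    define c where "c = (\<lambda>i. test_weight m ((t + i) mod 2^m))"
    have "(\<Sum>i<2^m. (c i)^2) = (\<Sum>i<2^m. (test_weight m ((i + t) mod 2^m))^2)"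
      by (simp add: c_def add.commute)
    also have "\<dots> = S"
      unfolding S_def sum_test_weight_power2[symmetric] by (rule sum_lessThan_mod_shift)
    finally have "3 * real B / 16 \<le> card {b. b < B \<and> S / 4 < (rademacher_sum (2^m) c b)^2}"
      using paley_zygmund_rademacher_sum[of c "2^m"] by (simp add: B_def S_def)
    also have "\<dots> = (\<Sum>b<B. of_bool (s < \<bar>haar_test_step m (b + t * B)\<bar>))"
      by (simp add: sum_of_bool_eq Int_def large_iff haar_test_step_eq c_def B_def)
    finally show ?thesis .
  qed
  then have "(\<Sum>t<(2::nat)^m. 3 * real B / 16) \<le>
      (\<Sum>t<2^m. \<Sum>b<B. of_bool (s < \<bar>haar_test_step m (b + t * B)\<bar>))"
    by (intro sum_mono)
  also have "\<dots> = (\<Sum>w<2^test_depth m. of_bool (s < \<bar>haar_test_step m w\<bar>))"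
    by (simp add: test_depth_def power_add B_def sum_mult_product)
  finally show ?thesis
    by (simp add: two_power_test_depth B_def field_simps)
qed

lemma weak_norm_haar_test_ge:
  "ennreal (sqrt (3 * 2^m * harm (2^m)) / 8) \<le> weak_norm (lebesgue_on {0..1}) 2 (haar_test m)"
proof -
  define s where "s = sqrt (2^m * harm (2^m) / 4)"
  have s: "s > 0"
    by (simp add: s_def)
  have "emeasure (lebesgue_on {0..1}) {x \<in> space (lebesgue_on {0..1}). s < \<bar>haar_test m x\<bar>} =
      ennreal ((\<Sum>w<2^test_depth m. of_bool (s < \<bar>haar_test_step m w\<bar>)) / 2^test_depth m)"
    using s haar_test_eq
    by (intro emeasure_abs_greater_dyadic_step) (auto simp: haar_test_def haar_block_at_1)
  then have "ennreal (3 / 16) \<le>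
      emeasure (lebesgue_on {0..1}) {x \<in> space (lebesgue_on {0..1}). s < \<bar>haar_test m x\<bar>}"
    using ennreal_leI[OF haar_test_step_large_count[of m, folded s_def]] by simp
  then have "ennreal (s * (3 / 16) powr (1 / 2)) \<le> weak_norm (lebesgue_on {0..1}) 2 (haar_test m)"
    using s by (intro weak_norm_ge) auto
  also have "s * (3 / 16) powr (1 / 2) = sqrt (3 * 2^m * harm (2^m)) / 8"
    by (simp add: s_def powr_half_sqrt real_sqrt_divide real_sqrt_mult)
  finally show ?thesis .
qed

lemma ex_harm_pow2_greater: "\<exists>m. (B::real) < harm (2^m)"
proof -
  obtain N where "\<forall>n\<ge>N. B < harm n"
    using harm_at_top[unfolded filterlim_at_top_dense] by (auto simp: eventually_sequentially)
  then have "B < harm (2^N)"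
    using less_exp[of N] by simp
  then show ?thesis ..
qed

lemma ex_test_size_gap:
  fixes c C :: real
  assumes c: "c > 0"
  shows "\<exists>m. C * sqrt (2^m) < c * (sqrt (3 * 2^m * harm (2^m)) / 8)"
proof -
  obtain m where "64 * C^2 / (3 * c^2) < harm (2^m)"
    using ex_harm_pow2_greater by blast
  then have "64 * C^2 < 3 * c^2 * harm (2^m)"
    using c by (simp add: pos_divide_less_eq mult.commute)
  then have "(C * sqrt (2^m))^2 < (c * (sqrt (3 * 2^m * harm (2^m)) / 8))^2"
    by (simp add: power_mult_distrib power_divide harm_nonneg)
  then have "C * sqrt (2^m) < c * (sqrt (3 * 2^m * harm (2^m)) / 8)"
    by (rule power_less_imp_less_base) (use c in \<open>simp add: harm_nonneg\<close>)
  then show ?thesis ..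
qed

section \<open>The image of the test function\<close>

lemma haar_block_index_bounds:
  assumes "i < 2^m" "l < 2^block_level m i"
  shows "2^block_level m i + l + 1 \<in> {1..(2::nat)^test_depth m}"
proof -
  have "block_level m i + 1 \<le> test_depth m"
    using assms(1) by (simp add: block_level_def test_depth_def)
  then have "(2::nat)^(block_level m i + 1) \<le> 2^test_depth m"
    by (rule power_increasing) simp
  moreover have "2^block_level m i + l + 1 \<le> (2::nat)^(block_level m i + 1)"
    using assms(2) by simp
  ultimately show ?thesis
    by simp
qed

lemma haar_block_index_inj:
  assumes "i < 2^m" "j < 2^m" "l < 2^block_level m i" "l' < 2^block_level m j"
    and "2^block_level m i + l + 1 = 2^block_level m j + l' + (1::nat)"
  shows "i = j"
proof -
  have "2^block_level m i + (l + 1) = 2^block_level m j + (l' + (1::nat))"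
    using assms(5) by simp
  then have "block_level m i = block_level m j"
    by (rule pow2_offset_unique) (use assms(3,4) in simp_all)
  with assms(1,2) show ?thesis
    by (simp add: block_level_def)
qed

lemma AE_pairwise_mult_zero:
  fixes f :: "'i \<Rightarrow> 'a \<Rightarrow> real"
  assumes "finite I" "\<forall>n\<in>I. \<forall>n'\<in>I. n \<noteq> n' \<longrightarrow> (AE x in M. min \<bar>f n x\<bar> \<bar>f n' x\<bar> = 0)"
  shows "AE x in M. \<forall>n\<in>I. \<forall>n'\<in>I. n \<noteq> n' \<longrightarrow> f n x * f n' x = 0"
proof (intro eventually_ball_finite ballI assms(1))
  fix n n' assume nn': "n \<in> I" "n' \<in> I"
  show "AE x in M. n \<noteq> n' \<longrightarrow> f n x * f n' x = 0"
  proof (cases "n = n'")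
    case False
    with assms(2) nn' have "AE x in M. min \<bar>f n x\<bar> \<bar>f n' x\<bar> = 0"
      by simp
    then show ?thesis
      by eventually_elim (auto simp: min_def split: if_splits)
  qed simp
qed

lemma AE_image_haar_block:
  fixes T :: "(real \<Rightarrow> real) \<Rightarrow> 'a \<Rightarrow> real" and M :: "'a measure"
  assumes linear: "\<forall>f \<in> Mweak (lebesgue_on {0..1}) 2. \<forall>g \<in> Mweak (lebesgue_on {0..1}) 2.
      \<forall>a b::real. AE x in M. T (\<lambda>y. a * f y + b * g y) x = a * T f x + b * T g x"
  shows "AE x in M. T (haar_block m i) x =
    (\<Sum>l<2^block_level m i. block_coeff m i l * T (haar (2^block_level m i + l + 1)) x)"
  unfolding haar_block_def
  by (intro AE_image_sum[OF _ linear] ballI haar_level_in_fin_char_span) auto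

lemma AE_image_haar_blocks_disjoint:
  fixes T :: "(real \<Rightarrow> real) \<Rightarrow> 'a \<Rightarrow> real" and M :: "'a measure"
  assumes linear: "\<forall>f \<in> Mweak (lebesgue_on {0..1}) 2. \<forall>g \<in> Mweak (lebesgue_on {0..1}) 2.
      \<forall>a b::real. AE x in M. T (\<lambda>y. a * f y + b * g y) x = a * T f x + b * T g x"
    and disjoint: "AE x in M. \<forall>n\<in>{1..2^test_depth m}. \<forall>n'\<in>{1..2^test_depth m}.
      n \<noteq> n' \<longrightarrow> T (haar n) x * T (haar n') x = 0"
  shows "AE x in M. \<forall>i\<in>{..<2^m}. \<forall>j\<in>{..<2^m}.
    i \<noteq> j \<longrightarrow> T (haar_block m i) x * T (haar_block m j) x = 0"
proof -
  define h where "h i l = haar (2^block_level m i + l + 1)" for i l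
  have "AE x in M. \<forall>i\<in>{..<2^m}.
      T (haar_block m i) x = (\<Sum>l<2^block_level m i. block_coeff m i l * T (h i l) x)"
    unfolding h_def using AE_image_haar_block[OF linear] by (intro eventually_ball_finite) auto
  then show ?thesis
    using disjoint
  proof eventually_elim
    case (elim x)
    show ?case
    proof (intro ballI impI)
      fix i j :: nat assume ij: "i \<in> {..<2^m}" "j \<in> {..<2^m}" "i \<noteq> j"
      have "T (h i l) x = 0 \<or> T (h j l') x = 0"
        if l: "l < 2^block_level m i" "l' < 2^block_level m j" for l l'
      proof -
        have "2^block_level m i + l + 1 \<noteq> 2^block_level m j + l' + 1"
          using haar_block_index_inj[of i m j l l'] ij l by auto
        then show ?thesis
          using elim(2) haar_block_index_bounds[of i m l] haar_block_index_bounds[of j m l'] ij l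
          unfolding h_def by simp
      qed
      then have "(\<Sum>l<2^block_level m i. block_coeff m i l * T (h i l) x) *
          (\<Sum>l'<2^block_level m j. block_coeff m j l' * T (h j l') x) = 0"
        unfolding sum_product by (intro sum.neutral ballI) auto
      then show "T (haar_block m i) x * T (haar_block m j) x = 0"
        using elim(1) ij by simp
    qed
  qed
qed

lemma weak_norm_image_haar_test_le:
  fixes T :: "(real \<Rightarrow> real) \<Rightarrow> 'a \<Rightarrow> real" and M :: "'a measure"
  assumes into: "\<forall>f \<in> Mweak (lebesgue_on {0..1}) 2. T f \<in> Lweak M 2"
    and linear: "\<forall>f \<in> Mweak (lebesgue_on {0..1}) 2. \<forall>g \<in> Mweak (lebesgue_on {0..1}) 2.
      \<forall>a b::real. AE x in M. T (\<lambda>y. a * f y + b * g y) x = a * T f x + b * T g x"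
    and C: "C \<ge> 0" "\<forall>f \<in> Mweak (lebesgue_on {0..1}) 2.
      weak_norm M 2 (T f) \<le> ennreal C * weak_norm (lebesgue_on {0..1}) 2 f"
    and disjoint: "\<forall>n n'. 1 \<le> n \<and> 1 \<le> n' \<and> n \<noteq> n' \<longrightarrow>
      (AE x in M. min \<bar>T (haar n) x\<bar> \<bar>T (haar n') x\<bar> = 0)"
  shows "weak_norm M 2 (T (haar_test m)) \<le> ennreal (C * sqrt (2^m))"
proof -
  have block: "haar_block m i \<in> Mweak (lebesgue_on {0..1}) 2" for i
    using haar_block_in_fin_char_span fin_char_span_subset_Mweak[of 2] by auto
  have "AE x in M. \<forall>n\<in>{1..2^test_depth m}. \<forall>n'\<in>{1..2^test_depth m}.
      n \<noteq> n' \<longrightarrow> T (haar n) x * T (haar n') x = 0"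
    using disjoint by (intro AE_pairwise_mult_zero) auto
  then have disj: "AE x in M. \<forall>i\<in>{..<2^m}. \<forall>j\<in>{..<2^m}.
      i \<noteq> j \<longrightarrow> T (haar_block m i) x * T (haar_block m j) x = 0"
    by (rule AE_image_haar_blocks_disjoint[OF linear])
  have sum: "AE x in M. T (haar_test m) x = (\<Sum>i<2^m. T (haar_block m i) x)"
    using AE_image_sum[OF _ linear, of "{..<2^m}" "haar_block m" "\<lambda>_. 1"]
      haar_block_in_fin_char_span
    by (simp add: haar_test_def)
  have norm: "weak_norm M 2 (T (haar_block m i)) \<le> ennreal C" if "i < 2^m" for i
  proof -
    have "weak_norm M 2 (T (haar_block m i)) \<le>
        ennreal C * weak_norm (lebesgue_on {0..1}) 2 (haar_block m i)"
      using C(2) block by blast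
    also have "\<dots> \<le> ennreal C * 1"
      using weak_norm_haar_block_le[OF that] by (rule mult_left_mono) simp
    finally show ?thesis by simp
  qed
  have meas: "T (haar_block m i) \<in> borel_measurable M" for i
    using into block unfolding Lweak_def by blast
  have "weak_norm M 2 (T (haar_test m)) \<le> ennreal (card {..<(2::nat)^m} powr (1 / 2) * C)"
    using meas norm by (intro weak_norm_sum_disjoint_le[OF _ C(1) _ _ _ disj sum]) simp_all
  then show ?thesis
    by (simp add: powr_half_sqrt mult.commute)
qed

theorem proposition8:
  fixes M :: "'a measure" and T :: "(real \<Rightarrow> real) \<Rightarrow> ('a \<Rightarrow> real)"
  assumes into: "\<forall>f \<in> Mweak (lebesgue_on {0..1}) 2. T f \<in> Lweak M 2"
    and linear: "\<forall>f \<in> Mweak (lebesgue_on {0..1}) 2. \<forall>g \<in> Mweak (lebesgue_on {0..1}) 2.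
                 \<forall>a b::real. AE x in M. T (\<lambda>y. a * f y + b * g y) x = a * T f x + b * T g x"
    and bounded: "\<exists>C>0. \<forall>f \<in> Mweak (lebesgue_on {0..1}) 2.
                 weak_norm M 2 (T f) \<le> ennreal C * weak_norm (lebesgue_on {0..1}) 2 f"
    and below: "\<exists>c>0. \<forall>f \<in> Mweak (lebesgue_on {0..1}) 2.
                 ennreal c * weak_norm (lebesgue_on {0..1}) 2 f \<le> weak_norm M 2 (T f)"
  shows "\<not> (\<forall>n m. 1 \<le> n \<and> 1 \<le> m \<and> n \<noteq> m \<longrightarrow>
              (AE x in M. min \<bar>T (haar n) x\<bar> \<bar>T (haar m) x\<bar> = 0))"
proof
  assume disj: "\<forall>n m. 1 \<le> n \<and> 1 \<le> m \<and> n \<noteq> m \<longrightarrow>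
    (AE x in M. min \<bar>T (haar n) x\<bar> \<bar>T (haar m) x\<bar> = 0)"
  obtain C where C: "C > 0" "\<forall>f \<in> Mweak (lebesgue_on {0..1}) 2.
      weak_norm M 2 (T f) \<le> ennreal C * weak_norm (lebesgue_on {0..1}) 2 f"
    using bounded by blast
  obtain c where c: "c > 0" "\<forall>f \<in> Mweak (lebesgue_on {0..1}) 2.
      ennreal c * weak_norm (lebesgue_on {0..1}) 2 f \<le> weak_norm M 2 (T f)"
    using below by blast
  obtain m where gap: "C * sqrt (2^m) < c * (sqrt (3 * 2^m * harm (2^m)) / 8)"
    using ex_test_size_gap[OF c(1)] by blast
  have "ennreal (c * (sqrt (3 * 2^m * harm (2^m)) / 8)) \<le>
      ennreal c * weak_norm (lebesgue_on {0..1}) 2 (haar_test m)"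
    using c(1)
    by (subst ennreal_mult) (simp_all add: mult_left_mono weak_norm_haar_test_ge harm_nonneg)
  also have "\<dots> \<le> weak_norm M 2 (T (haar_test m))"
    using c haar_test_in_fin_char_span fin_char_span_subset_Mweak[of 2] by auto
  also have "\<dots> \<le> ennreal (C * sqrt (2^m))"
    using C disj by (intro weak_norm_image_haar_test_le[OF into linear]) auto
  finally show False
    using gap C(1) by (subst (asm) ennreal_le_iff) auto
qed

end
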